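(* Let $g$ be an $n$-person WTT game form satisfying the standing assumptions below, let $i\in[n]$ and $j\in X_i$. Then either the hyperplane $H_j$ has a proper outcome, or $H_j$ is a sink hyperplane.
   Context: Let $X_1,\dots,X_n$ and $A$ be finite nonempty sets. An $n$-person game form is a map $g: X_1\times\cdots\times X_n\to A$; elements of $X=X_1\times\cdots\times X_n$ are strategy profiles. For a direction $i\in[n]$ write $X_{-i}=\prod_{t\neq i}X_t$, and for $s\in X_i$, $y\in X_{-i}$ write $(s,y)$ for the profile with $i$-th coordinate $s$ and other coordinates $y$. The hyperplane perpendicular to direction $i$ at $s\in X_i$ is $H_s=\{x\in X: x_i=s\}$. $g$ is weakly totally tight (WTT) if for every $i\in[n]$, all $s\neq s'$ in $X_i$ and all $y\neq y'$ in $X_{-i}$, at least one of $g(s,y)=g(s,y')$, $g(s,y)=g(s',y)$, $g(s',y')=g(s',y)$, $g(s',y')=g(s,y')$ holds. A set $S\subseteq X$ is a constant region if there is $c\in A$ with $g(x)=c$ for all $x\in S$. For distinct $j,k\in X_i$, $H_j^{\neq}(k)=\{(j,y): y\in X_{-i},\ g(j,y)\neq g(k,y)\}$. We write $H_j\stackrel{c}{\longrightarrow}H_k$ if $g(x)=c$ for all $x\in H_j^{\neq}(k)$, and $H_j\stackrel{c}{\Longrightarrow}H_k$ if $H_j\stackrel{c}{\longrightarrow}H_k$ and there is no outcome $d$ with $H_k\stackrel{d}{\longrightarrow}H_j$. If there exist $k\in X_i\setminus\{j\}$ and $c\in A$ with $H_j\stackrel{c}{\Longrightarrow}H_k$, then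 $c$ is called the proper outcome of $H_j$ (for WTT $g$ it does not depend on the choice of $k$). $H_j$ is a sink hyperplane if for every $k\in X_i\setminus\{j\}$ there exists an outcome $c_k$ with $H_k\stackrel{c_k}{\longrightarrow}H_j$. Standing assumptions: no hyperplane of $g$ is a constant region, and for every $i$ and distinct $j,k\in X_i$ there is $y\in X_{-i}$ with $g(j,y)\neq g(k,y)$. *)

theory Defs
  imports "HOL-Library.FuncSet"
begin

text \<open>Players are indexed by 0..<n. A strategy profile is an extensional
function on {..<n} with x t in X t. For a direction i, a profile of the other
players is an extensional function on {..<n} - {i}.\<close>

definition profiles :: "nat \<Rightarrow> (nat \<Rightarrow> 's set) \<Rightarrow> (nat \<Rightarrow> 's) set" where
  "profiles n X = PiE {..<n} X"

definition others :: "nat \<Rightarrow> (nat \<Rightarrow> 's set) \<Rightarrow> nat \<Rightarrow> (nat \<Rightarrow> 's) set" where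
  "others n X i = PiE ({..<n} - {i}) X"

text \<open>The profile (s,y) with i-th coordinate s and other coordinates y.\<close>
definition join :: "nat \<Rightarrow> 's \<Rightarrow> (nat \<Rightarrow> 's) \<Rightarrow> (nat \<Rightarrow> 's)" where
  "join i s y = y(i := s)"

definition game_form :: "nat \<Rightarrow> (nat \<Rightarrow> 's set) \<Rightarrow> 'a set \<Rightarrow> ((nat \<Rightarrow> 's) \<Rightarrow> 'a) \<Rightarrow> bool" where
  "game_form n X A g \<longleftrightarrow> (\<forall>t<n. finite (X t) \<and> X t \<noteq> {}) \<and> finite A \<and> A \<noteq> {}
     \<and> (\<forall>x\<in>profiles n X. g x \<in> A)"

definition WTT :: "nat \<Rightarrow> (nat \<Rightarrow> 's set) \<Rightarrow> ((nat \<Rightarrow> 's) \<Rightarrow> 'a) \<Rightarrow> bool" where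
  "WTT n X g \<longleftrightarrow> (\<forall>i<n. \<forall>s\<in>X i. \<forall>s'\<in>X i. s \<noteq> s' \<longrightarrow>
     (\<forall>y\<in>others n X i. \<forall>y'\<in>others n X i. y \<noteq> y' \<longrightarrow>
        g (join i s y) = g (join i s y') \<or> g (join i s y) = g (join i s' y) \<or>
        g (join i s' y') = g (join i s' y) \<or> g (join i s' y') = g (join i s y')))"

definition hyperplane :: "nat \<Rightarrow> (nat \<Rightarrow> 's set) \<Rightarrow> nat \<Rightarrow> 's \<Rightarrow> (nat \<Rightarrow> 's) set" where
  "hyperplane n X i s = {x \<in> profiles n X. x i = s}"

definition constant_region :: "'a set \<Rightarrow> ((nat \<Rightarrow> 's) \<Rightarrow> 'a) \<Rightarrow> (nat \<Rightarrow> 's) set \<Rightarrow> bool" where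
  "constant_region A g S \<longleftrightarrow> (\<exists>c\<in>A. \<forall>x\<in>S. g x = c)"

definition Hneq :: "nat \<Rightarrow> (nat \<Rightarrow> 's set) \<Rightarrow> ((nat \<Rightarrow> 's) \<Rightarrow> 'a) \<Rightarrow> nat \<Rightarrow> 's \<Rightarrow> 's \<Rightarrow> (nat \<Rightarrow> 's) set" where
  "Hneq n X g i j k = {join i j y | y. y \<in> others n X i \<and> g (join i j y) \<noteq> g (join i k y)}"

definition arrow :: "nat \<Rightarrow> (nat \<Rightarrow> 's set) \<Rightarrow> ((nat \<Rightarrow> 's) \<Rightarrow> 'a) \<Rightarrow> nat \<Rightarrow> 's \<Rightarrow> 's \<Rightarrow> 'a \<Rightarrow> bool" where
  "arrow n X g i j k c \<longleftrightarrow> (\<forall>x\<in>Hneq n X g i j k. g x = c)"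

definition strong_arrow :: "nat \<Rightarrow> (nat \<Rightarrow> 's set) \<Rightarrow> 'a set \<Rightarrow> ((nat \<Rightarrow> 's) \<Rightarrow> 'a) \<Rightarrow> nat \<Rightarrow> 's \<Rightarrow> 's \<Rightarrow> 'a \<Rightarrow> bool" where
  "strong_arrow n X A g i j k c \<longleftrightarrow> arrow n X g i j k c \<and> \<not> (\<exists>d\<in>A. arrow n X g i k j d)"

definition has_proper_outcome :: "nat \<Rightarrow> (nat \<Rightarrow> 's set) \<Rightarrow> 'a set \<Rightarrow> ((nat \<Rightarrow> 's) \<Rightarrow> 'a) \<Rightarrow> nat \<Rightarrow> 's \<Rightarrow> bool" where
  "has_proper_outcome n X A g i j \<longleftrightarrow> (\<exists>k\<in>X i - {j}. \<exists>c\<in>A. strong_arrow n X A g i j k c)"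

definition sink_hyperplane :: "nat \<Rightarrow> (nat \<Rightarrow> 's set) \<Rightarrow> 'a set \<Rightarrow> ((nat \<Rightarrow> 's) \<Rightarrow> 'a) \<Rightarrow> nat \<Rightarrow> 's \<Rightarrow> bool" where
  "sink_hyperplane n X A g i j \<longleftrightarrow> (\<forall>k\<in>X i - {j}. \<exists>c\<in>A. arrow n X g i k j c)"

definition standing_assumptions :: "nat \<Rightarrow> (nat \<Rightarrow> 's set) \<Rightarrow> 'a set \<Rightarrow> ((nat \<Rightarrow> 's) \<Rightarrow> 'a) \<Rightarrow> bool" where
  "standing_assumptions n X A g \<longleftrightarrow>
     (\<forall>i<n. \<forall>s\<in>X i. \<not> constant_region A g (hyperplane n X i s)) \<and>
     (\<forall>i<n. \<forall>j\<in>X i. \<forall>k\<in>X i. j \<noteq> k \<longrightarrow>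
        (\<exists>y\<in>others n X i. g (join i j y) \<noteq> g (join i k y)))"

end

theory Submission
  imports Defs
begin

text \<open>Fix j \<noteq> k in X i and let D be the set of y on which the two hyperplanes disagree.
For two distinct y, y' \<in> D the WTT condition on the 2\<times>2 minor {j,k}\<times>{y,y'} leaves only
g(j,y) = g(j,y') or g(k,y) = g(k,y'). Such a pairwise alternative forces one of the two
functions to be constant on D, i.e. H_j \<rightarrow> H_k or H_k \<rightarrow> H_j. If H_j is not a sink there
is a k with no arrow H_k \<rightarrow> H_j, so the arrow H_j \<rightarrow> H_k is a strong one.\<close>

lemma pairwise_alternative_imp_constant:
  assumes "\<And>y y'. y \<in> D \<Longrightarrow> y' \<in> D \<Longrightarrow> y \<noteq> y' \<Longrightarrow> a y = a y' \<or> b y = b y'"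
  shows "(\<forall>y\<in>D. \<forall>y'\<in>D. a y = a y') \<or> (\<forall>y\<in>D. \<forall>y'\<in>D. b y = b y')"
proof (rule ccontr)
  assume "\<not> ?thesis"
  then obtain y1 y2 z1 z2 where D: "y1 \<in> D" "y2 \<in> D" "z1 \<in> D" "z2 \<in> D"
    and a_ne: "a y1 \<noteq> a y2" and b_ne: "b z1 \<noteq> b z2" by blast
  have alt: "\<And>y y'. y \<in> D \<Longrightarrow> y' \<in> D \<Longrightarrow> a y = a y' \<or> b y = b y'"
    using assms by blast
  have a_z: "a z1 = a z2" using alt D b_ne by blast
  obtain y where y: "y \<in> D" "a y \<noteq> a z1" using D a_ne by metis
  have "b y = b z1" using alt[OF y(1) D(3)] y(2) by simp
  moreover have "b y = b z2" using alt[OF y(1) D(4)] y(2) a_z by simp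
  ultimately show False using b_ne by simp
qed

lemma join_in_profiles:
  assumes "i < n" "s \<in> X i" "y \<in> others n X i"
  shows "join i s y \<in> profiles n X"
  using assms unfolding profiles_def others_def join_def PiE_def Pi_def extensional_def
  by auto

lemma WTT_disagreement_alternative:
  assumes "WTT n X g" "i < n" "j \<in> X i" "k \<in> X i" "j \<noteq> k"
    and "y \<in> others n X i" "y' \<in> others n X i" "y \<noteq> y'"
    and "g (join i j y) \<noteq> g (join i k y)" "g (join i j y') \<noteq> g (join i k y')"
  shows "g (join i j y) = g (join i j y') \<or> g (join i k y) = g (join i k y')"
proof -
  have "g (join i j y) = g (join i j y') \<or> g (join i j y) = g (join i k y) \<or>
      g (join i k y') = g (join i k y) \<or> g (join i k y') = g (join i j y')"
    using assms(1-8) unfolding WTT_def by blast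
  then show ?thesis using assms(9,10) by auto
qed

lemma arrow_iff:
  "arrow n X g i j k c \<longleftrightarrow>
     (\<forall>y\<in>others n X i. g (join i j y) \<noteq> g (join i k y) \<longrightarrow> g (join i j y) = c)"
  unfolding arrow_def Hneq_def by auto

lemma arrow_exists_if_constant:
  assumes "game_form n X A g" "i < n" "j \<in> X i"
    and D: "D = {y \<in> others n X i. g (join i j y) \<noteq> g (join i k y)}"
    and const: "\<forall>y\<in>D. \<forall>y'\<in>D. g (join i j y) = g (join i j y')"
  shows "\<exists>c\<in>A. arrow n X g i j k c"
proof (cases "D = {}")
  case True
  from assms(1) obtain c where "c \<in> A" unfolding game_form_def by blast
  moreover have "arrow n X g i j k c" using True unfolding arrow_iff D by blast
  ultimately show ?thesis ..
next
  case False
  then obtain y0 where y0: "y0 \<in> D" by blast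
  then have "join i j y0 \<in> profiles n X"
    using join_in_profiles[of i n j X] assms(2,3) unfolding D by blast
  then have "g (join i j y0) \<in> A" using assms(1) unfolding game_form_def by blast
  moreover have "arrow n X g i j k (g (join i j y0))"
    unfolding arrow_iff using y0 const unfolding D by blast
  ultimately show ?thesis ..
qed

lemma WTT_arrow_one_way:
  assumes "game_form n X A g" "WTT n X g" "i < n" "j \<in> X i" "k \<in> X i" "j \<noteq> k"
  shows "(\<exists>c\<in>A. arrow n X g i j k c) \<or> (\<exists>c\<in>A. arrow n X g i k j c)"
proof -
  define D where "D = {y \<in> others n X i. g (join i j y) \<noteq> g (join i k y)}"
  have D_sym: "D = {y \<in> others n X i. g (join i k y) \<noteq> g (join i j y)}"
    unfolding D_def by auto
  have "g (join i j y) = g (join i j y') \<or> g (join i k y) = g (join i k y')"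
    if "y \<in> D" "y' \<in> D" "y \<noteq> y'" for y y'
    using that WTT_disagreement_alternative[OF assms(2,3) _ _ assms(6), of y y']
      assms(4,5) unfolding D_def by blast
  then consider "\<forall>y\<in>D. \<forall>y'\<in>D. g (join i j y) = g (join i j y')"
    | "\<forall>y\<in>D. \<forall>y'\<in>D. g (join i k y) = g (join i k y')"
    using pairwise_alternative_imp_constant[of D "\<lambda>y. g (join i j y)" "\<lambda>y. g (join i k y)"]
    by blast
  then show ?thesis
  proof cases
    case 1
    show ?thesis
      using arrow_exists_if_constant[of n X A g i j D k, OF assms(1,3,4) D_def 1] by (rule disjI1)
  next
    case 2
    show ?thesis
      using arrow_exists_if_constant[of n X A g i k D j, OF assms(1,3,5) D_sym 2] by (rule disjI2)
  qed
qed

theorem mainTheorem5: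
  fixes n :: nat and X :: "nat \<Rightarrow> 's set" and A :: "'a set" and g :: "(nat \<Rightarrow> 's) \<Rightarrow> 'a"
  assumes "game_form n X A g"
    and "WTT n X g"
    and "standing_assumptions n X A g"
    and "i < n" and "j \<in> X i"
  shows "has_proper_outcome n X A g i j \<or> sink_hyperplane n X A g i j"
proof (cases "sink_hyperplane n X A g i j")
  case False
  then obtain k where k: "k \<in> X i" "k \<noteq> j" and no_back: "\<not> (\<exists>d\<in>A. arrow n X g i k j d)"
    unfolding sink_hyperplane_def by blast
  from WTT_arrow_one_way[of n X A g i j k, OF assms(1,2,4,5) k(1)] k(2) no_back
  obtain c where "c \<in> A" "arrow n X g i j k c" by blast
  with no_back have "strong_arrow n X A g i j k c" unfolding strong_arrow_def by blast
  with k \<open>c \<in> A\<close> show ?thesis unfolding has_proper_outcome_def by blast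
qed simp

end
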